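(* Let $A=\bigoplus_{k=0}^nA_k$ be a finite-dimensional $\mathbb Z_+$-graded algebra with $A_0=\mathbb C$, equipped with a $\Gamma$-valued filtration $\{F_\alpha A_k: k\in\mathbb Z_+,\alpha\in\Gamma_k\}$ for a graded ordered semigroup $\Gamma$. If the associated $\Gamma$-graded algebra $\mathrm{gr}^FA$ is a Frobenius algebra, then $A$ is a Frobenius algebra.
   Context: A graded ordered semigroup is a semigroup $\Gamma$ with unit $e$, a homomorphism $g:\Gamma\to\mathbb Z_+$ with $g^{-1}(0)=\{e\}$ and each $\Gamma_n=g^{-1}(n)$ finite and totally ordered, such that $\alpha<\beta$ in $\Gamma_n$ implies $\alpha\gamma<\beta\gamma$ and $\gamma\alpha<\gamma\beta$. A $\Gamma$-valued filtration on a graded algebra $A$ is a family of subspaces $F_\alpha\subseteq A_n$ ($\alpha\in\Gamma_n$) with $F_\alpha\subseteq F_\beta$ for $\alpha\le\beta$, $F_{\gamma_n}=A_n$ for the maximal $\gamma_n\in\Gamma_n$, and $F_\alpha F_\beta\subseteq F_{\alpha\beta}$. The associated graded algebra is $\mathrm{gr}^FA=\bigoplus_{\alpha\in\Gamma}F_\alpha/F_{\alpha'}$, where $\alpha'$ is the immediate predecessor of $\alpha$ in $\Gamma_{g(\alpha)}$ ($F_{\alpha'}=0$ if $\alpha$ is minimal). A finite-dimensional algebra is Frobenius if some linear functional on it has kernel containing no nonzero left ideal. *)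

theory Defs
  imports Complex_Main
begin

definition graded_ordered_semigroup ::
  "('g::monoid_mult \<Rightarrow> nat) \<Rightarrow> ('g \<Rightarrow> 'g \<Rightarrow> bool) \<Rightarrow> bool" where
  "graded_ordered_semigroup g lt \<longleftrightarrow>
     (\<forall>a b. g (a * b) = g a + g b) \<and>
     {a. g a = 0} = {1} \<and>
     (\<forall>n. finite {a. g a = n}) \<and>
     (\<forall>a b. lt a b \<longrightarrow> g a = g b) \<and>
     (\<forall>a. \<not> lt a a) \<and>
     (\<forall>a b c. lt a b \<longrightarrow> lt b c \<longrightarrow> lt a c) \<and>
     (\<forall>a b. g a = g b \<longrightarrow> a = b \<or> lt a b \<or> lt b a) \<and>
     (\<forall>a b c. lt a b \<longrightarrow> lt (a * c) (b * c) \<and> lt (c * a) (c * b))"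

definition gpred :: "('g \<Rightarrow> 'g \<Rightarrow> bool) \<Rightarrow> 'g \<Rightarrow> 'g" where
  "gpred lt \<alpha> = (THE \<beta>. lt \<beta> \<alpha> \<and> (\<forall>\<gamma>. lt \<gamma> \<alpha> \<longrightarrow> \<not> lt \<beta> \<gamma>))"

definition complex_algebra :: "(complex \<Rightarrow> 'a::ring_1 \<Rightarrow> 'a) \<Rightarrow> bool" where
  "complex_algebra smul \<longleftrightarrow> vector_space smul \<and>
     (\<forall>c x y. smul c (x * y) = smul c x * y \<and> smul c (x * y) = x * smul c y)"

definition fin_dim :: "(complex \<Rightarrow> 'a::ring_1 \<Rightarrow> 'a) \<Rightarrow> bool" where
  "fin_dim smul \<longleftrightarrow> (\<exists>B. finite B \<and> module.span smul B = UNIV)"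

definition graded_algebra ::
  "(complex \<Rightarrow> 'a::ring_1 \<Rightarrow> 'a) \<Rightarrow> (nat \<Rightarrow> 'a set) \<Rightarrow> nat \<Rightarrow> bool" where
  "graded_algebra smul A n \<longleftrightarrow>
     complex_algebra smul \<and>
     (\<forall>k. module.subspace smul (A k)) \<and>
     (\<forall>k>n. A k = {0}) \<and>
     (\<forall>x. \<exists>!f. (\<forall>k. f k \<in> A k) \<and> x = (\<Sum>k\<le>n. f k)) \<and>
     (\<forall>j k x y. x \<in> A j \<longrightarrow> y \<in> A k \<longrightarrow> x * y \<in> A (j + k)) \<and>
     A 0 = range (\<lambda>c. smul c 1) \<and> (1::'a) \<noteq> 0"

definition gamma_filtration ::
  "(complex \<Rightarrow> 'a::ring_1 \<Rightarrow> 'a) \<Rightarrow> (nat \<Rightarrow> 'a set) \<Rightarrow>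
   ('g::monoid_mult \<Rightarrow> nat) \<Rightarrow> ('g \<Rightarrow> 'g \<Rightarrow> bool) \<Rightarrow> ('g \<Rightarrow> 'a set) \<Rightarrow> bool" where
  "gamma_filtration smul A g lt F \<longleftrightarrow>
     (\<forall>\<alpha>. module.subspace smul (F \<alpha>) \<and> F \<alpha> \<subseteq> A (g \<alpha>)) \<and>
     (\<forall>\<alpha> \<beta>. lt \<alpha> \<beta> \<longrightarrow> F \<alpha> \<subseteq> F \<beta>) \<and>
     (\<forall>\<gamma>. (\<forall>\<beta>. g \<beta> = g \<gamma> \<longrightarrow> \<not> lt \<gamma> \<beta>) \<longrightarrow> F \<gamma> = A (g \<gamma>)) \<and>
     (\<forall>k. A k \<noteq> {0} \<longrightarrow> (\<exists>\<gamma>. g \<gamma> = k)) \<and>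
     (\<forall>\<alpha> \<beta> x y. x \<in> F \<alpha> \<longrightarrow> y \<in> F \<beta> \<longrightarrow> x * y \<in> F (\<alpha> * \<beta>))"

definition Fprev :: "('g \<Rightarrow> 'g \<Rightarrow> bool) \<Rightarrow> ('g \<Rightarrow> 'a::zero set) \<Rightarrow> 'g \<Rightarrow> 'a set" where
  "Fprev lt F \<alpha> = (if \<exists>\<beta>. lt \<beta> \<alpha> then F (gpred lt \<alpha>) else {0})"

definition left_ideal ::
  "'v set \<Rightarrow> ('v \<Rightarrow> 'v \<Rightarrow> 'v) \<Rightarrow> (complex \<Rightarrow> 'v \<Rightarrow> 'v) \<Rightarrow> ('v \<Rightarrow> 'v \<Rightarrow> 'v) \<Rightarrow> 'v
    \<Rightarrow> 'v set \<Rightarrow> bool" where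
  "left_ideal S add smul mul z I \<longleftrightarrow> I \<subseteq> S \<and> z \<in> I \<and>
     (\<forall>x\<in>I. \<forall>y\<in>I. add x y \<in> I) \<and> (\<forall>c. \<forall>x\<in>I. smul c x \<in> I) \<and>
     (\<forall>a\<in>S. \<forall>x\<in>I. mul a x \<in> I)"

definition frobenius ::
  "'v set \<Rightarrow> ('v \<Rightarrow> 'v \<Rightarrow> 'v) \<Rightarrow> (complex \<Rightarrow> 'v \<Rightarrow> 'v) \<Rightarrow> ('v \<Rightarrow> 'v \<Rightarrow> 'v) \<Rightarrow> 'v \<Rightarrow> bool" where
  "frobenius S add smul mul z \<longleftrightarrow>
     (\<exists>\<phi> :: 'v \<Rightarrow> complex.
        (\<forall>x\<in>S. \<forall>y\<in>S. \<phi> (add x y) = \<phi> x + \<phi> y) \<and>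
        (\<forall>c. \<forall>x\<in>S. \<phi> (smul c x) = c * \<phi> x) \<and>
        (\<forall>I. left_ideal S add smul mul z I \<longrightarrow> (\<forall>x\<in>I. \<phi> x = 0) \<longrightarrow> I \<subseteq> {z}))"

text \<open>Representatives: families x with x alpha in F alpha; two families represent the
  same element of (direct sum over alpha of) F_alpha / F_alpha' iff they agree
  modulo F_alpha' in every component.\<close>

definition gr_reps :: "('g \<Rightarrow> 'a set) \<Rightarrow> ('g \<Rightarrow> 'a) set" where
  "gr_reps F = {x. \<forall>\<alpha>. x \<alpha> \<in> F \<alpha>}"

definition gr_cls :: "('g \<Rightarrow> 'g \<Rightarrow> bool) \<Rightarrow> ('g \<Rightarrow> 'a::ab_group_add set) \<Rightarrow> ('g \<Rightarrow> 'a) \<Rightarrow> ('g \<Rightarrow> 'a) set" where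
  "gr_cls lt F x = {y \<in> gr_reps F. \<forall>\<alpha>. x \<alpha> - y \<alpha> \<in> Fprev lt F \<alpha>}"

definition gr_carrier :: "('g \<Rightarrow> 'g \<Rightarrow> bool) \<Rightarrow> ('g \<Rightarrow> 'a::ab_group_add set) \<Rightarrow> ('g \<Rightarrow> 'a) set set" where
  "gr_carrier lt F = gr_cls lt F ` gr_reps F"

definition gr_rep :: "('g \<Rightarrow> 'a) set \<Rightarrow> 'g \<Rightarrow> 'a" where
  "gr_rep X = (SOME x. x \<in> X)"

definition gr_add :: "('g \<Rightarrow> 'g \<Rightarrow> bool) \<Rightarrow> ('g \<Rightarrow> 'a::ab_group_add set) \<Rightarrow>
    ('g \<Rightarrow> 'a) set \<Rightarrow> ('g \<Rightarrow> 'a) set \<Rightarrow> ('g \<Rightarrow> 'a) set" where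
  "gr_add lt F X Y = gr_cls lt F (\<lambda>\<alpha>. gr_rep X \<alpha> + gr_rep Y \<alpha>)"

definition gr_smul :: "(complex \<Rightarrow> 'a \<Rightarrow> 'a) \<Rightarrow> ('g \<Rightarrow> 'g \<Rightarrow> bool) \<Rightarrow> ('g \<Rightarrow> 'a::ab_group_add set) \<Rightarrow>
    complex \<Rightarrow> ('g \<Rightarrow> 'a) set \<Rightarrow> ('g \<Rightarrow> 'a) set" where
  "gr_smul smul lt F c X = gr_cls lt F (\<lambda>\<alpha>. smul c (gr_rep X \<alpha>))"

text \<open>Multiplication: the class of the component alpha*beta of the product is
  the class of the product of the components; summing over all factorizations
  gamma = alpha * beta (a finite set).\<close>
definition gr_mul :: "('g::monoid_mult \<Rightarrow> 'g \<Rightarrow> bool) \<Rightarrow> ('g \<Rightarrow> 'a::ring_1 set) \<Rightarrow>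
    ('g \<Rightarrow> 'a) set \<Rightarrow> ('g \<Rightarrow> 'a) set \<Rightarrow> ('g \<Rightarrow> 'a) set" where
  "gr_mul lt F X Y = gr_cls lt F (\<lambda>\<gamma>.
      \<Sum>p\<in>{(\<alpha>, \<beta>). \<alpha> * \<beta> = \<gamma>}. gr_rep X (fst p) * gr_rep Y (snd p))"

definition gr_zero :: "('g \<Rightarrow> 'g \<Rightarrow> bool) \<Rightarrow> ('g \<Rightarrow> 'a::ab_group_add set) \<Rightarrow> ('g \<Rightarrow> 'a) set" where
  "gr_zero lt F = gr_cls lt F (\<lambda>_. 0)"

definition gr_frobenius :: "(complex \<Rightarrow> 'a::ring_1 \<Rightarrow> 'a) \<Rightarrow> ('g::monoid_mult \<Rightarrow> 'g \<Rightarrow> bool)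
    \<Rightarrow> ('g \<Rightarrow> 'a set) \<Rightarrow> bool" where
  "gr_frobenius smul lt F \<longleftrightarrow>
     frobenius (gr_carrier lt F) (gr_add lt F) (gr_smul smul lt F) (gr_mul lt F) (gr_zero lt F)"

end

theory Submission
  imports Defs
begin

text \<open>
  Let \<open>\<psi>\<close> be a Frobenius form on \<open>gr\<^sup>F A\<close>. If a class \<open>f\<close> is annihilated on the left by
  everything of positive degree, then \<open>gr\<^sup>F A \<cdot> f = \<complex> f\<close> because the degree-0 part of
  \<open>gr\<^sup>F A\<close> is \<open>\<complex>\<close>; so \<open>\<psi> f \<noteq> 0\<close> unless \<open>f = 0\<close>. Consequently all nonzero homogeneous elements
  of \<open>A\<close> that are annihilated on the left by \<open>A\<^sub>+\<close> have the same \<open>\<Gamma>\<close>-degree (otherwise a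
  suitable combination of their symbols would be a nonzero such class in the kernel of \<open>\<psi>\<close>);
  in particular they all live in the top degree \<open>N\<close> of \<open>A\<close> and have one \<open>\<Gamma>\<close>-degree \<open>\<omega>\<close>.
  Then \<open>\<phi>(x) = \<psi>(symbol of x\<^sub>N at \<omega>)\<close> is a Frobenius form on \<open>A\<close>: \<open>\<phi>\<close> does not vanish on
  \<open>A\<^sub>N - {0}\<close>, and every \<open>x \<noteq> 0\<close> can be multiplied on the left into \<open>A\<^sub>N - {0}\<close> by
  multiplying its lowest component with an element of maximal degree not annihilating it.
\<close>

lemma frobeniusI:
  fixes smul :: "complex \<Rightarrow> 'a::ring_1 \<Rightarrow> 'a" and \<phi> :: "'a \<Rightarrow> complex"
  assumes "\<And>x y. \<phi> (x + y) = \<phi> x + \<phi> y"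
    and "\<And>c x. \<phi> (smul c x) = c * \<phi> x"
    and nondegenerate: "\<And>x. x \<noteq> 0 \<Longrightarrow> \<exists>a. \<phi> (a * x) \<noteq> 0"
  shows "frobenius UNIV (+) smul (*) 0"
  unfolding frobenius_def
proof (intro exI conjI allI ballI impI)
  fix I assume I: "left_ideal UNIV (+) smul (*) 0 I" and kernel: "\<forall>x\<in>I. \<phi> x = 0"
  show "I \<subseteq> {0}"
  proof
    fix x assume "x \<in> I"
    then have "\<phi> (a * x) = 0" for a
      using I kernel unfolding left_ideal_def by blast
    then show "x \<in> {0}" using nondegenerate by blast
  qed
qed (use assms in auto)


section \<open>Graded algebras with \<open>A\<^sub>0 = \<complex>\<close>\<close>

locale graded_complex_algebra =
  fixes smul :: "complex \<Rightarrow> 'a::ring_1 \<Rightarrow> 'a" and A :: "nat \<Rightarrow> 'a set" and n :: nat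
  assumes graded_algebra: "graded_algebra smul A n"
begin

sublocale V: vector_space smul
  using graded_algebra unfolding graded_algebra_def complex_algebra_def by auto

lemma subspace_A: "V.subspace (A k)"
  using graded_algebra unfolding graded_algebra_def by auto

lemma A_above_n: "n < k \<Longrightarrow> A k = {0}"
  using graded_algebra unfolding graded_algebra_def by auto

lemma ex1_decomposition: "\<exists>!f. (\<forall>k. f k \<in> A k) \<and> x = (\<Sum>k\<le>n. f k)"
  using graded_algebra unfolding graded_algebra_def by auto

lemma mult_A: "x \<in> A j \<Longrightarrow> y \<in> A k \<Longrightarrow> x * y \<in> A (j + k)"
  using graded_algebra unfolding graded_algebra_def by auto

lemma A_0: "A 0 = range (\<lambda>c. smul c 1)"
  using graded_algebra unfolding graded_algebra_def by auto

lemma one_in_A_0: "1 \<in> A 0"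
  unfolding A_0 by (metis V.scale_one rangeI)

lemma one_neq_zero: "(1::'a) \<noteq> 0"
  using graded_algebra unfolding graded_algebra_def by auto

lemma scale_mult_left: "smul c (x * y) = smul c x * y"
  using graded_algebra unfolding graded_algebra_def complex_algebra_def by auto

lemma scale_mult_right: "smul c (x * y) = x * smul c y"
  using graded_algebra unfolding graded_algebra_def complex_algebra_def by metis

definition component :: "'a \<Rightarrow> nat \<Rightarrow> 'a" where
  "component x = (THE f. (\<forall>k. f k \<in> A k) \<and> x = (\<Sum>k\<le>n. f k))"

lemma component_in_A: "component x k \<in> A k"
  and sum_component: "(\<Sum>k\<le>n. component x k) = x"
  using theI'[OF ex1_decomposition[of x]] unfolding component_def by auto

lemma component_eqI: "(\<And>k. f k \<in> A k) \<Longrightarrow> x = (\<Sum>k\<le>n. f k) \<Longrightarrow> component x = f"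
  unfolding component_def by (rule the1_equality[OF ex1_decomposition]) auto

lemma component_add: "component (x + y) = (\<lambda>k. component x k + component y k)"
proof (rule component_eqI)
  show "component x k + component y k \<in> A k" for k
    using V.subspace_add[OF subspace_A] component_in_A by blast
  show "x + y = (\<Sum>k\<le>n. component x k + component y k)"
    by (simp add: sum.distrib sum_component)
qed

lemma component_scale: "component (smul c x) = (\<lambda>k. smul c (component x k))"
proof (rule component_eqI)
  show "smul c (component x k) \<in> A k" for k
    using V.subspace_scale[OF subspace_A] component_in_A by blast
  show "smul c x = (\<Sum>k\<le>n. smul c (component x k))"
    by (simp only: V.scale_sum_right[symmetric] sum_component)
qed

lemma component_homogeneous:
  assumes "y \<in> A j" "j \<le> n"
  shows "component y j = y"
proof -
  have "component y = (\<lambda>k. if k = j then y else 0)"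
    by (rule component_eqI) (use assms V.subspace_0[OF subspace_A] in auto)
  then show ?thesis by simp
qed

definition top_degree :: nat where
  "top_degree = Max {k. k \<le> n \<and> A k \<noteq> {0}}"

lemma top_degree_le: "top_degree \<le> n"
  and A_top_degree_neq: "A top_degree \<noteq> {0}"
proof -
  have "0 \<in> {k. k \<le> n \<and> A k \<noteq> {0}}"
    using one_in_A_0 one_neq_zero by auto
  then have "top_degree \<in> {k. k \<le> n \<and> A k \<noteq> {0}}"
    unfolding top_degree_def by (intro Max_in) auto
  then show "top_degree \<le> n" "A top_degree \<noteq> {0}" by auto
qed

lemma A_above_top_degree:
  assumes "top_degree < k"
  shows "A k = {0}"
proof (rule ccontr)
  assume "A k \<noteq> {0}"
  moreover have "k \<le> n"
    using A_above_n[of k] \<open>A k \<noteq> {0}\<close> by (cases "n < k") auto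
  ultimately have "k \<in> {k. k \<le> n \<and> A k \<noteq> {0}}" by blast
  then have "k \<le> top_degree"
    unfolding top_degree_def by (intro Max_ge) auto
  with assms show False by simp
qed

definition annihilated_by_positive :: "'a \<Rightarrow> bool" where
  "annihilated_by_positive y \<longleftrightarrow> (\<forall>j u. 0 < j \<longrightarrow> u \<in> A j \<longrightarrow> u * y = 0)"

lemma annihilated_by_positive_0: "annihilated_by_positive 0"
  unfolding annihilated_by_positive_def by simp

lemma annihilated_by_positive_add:
  "annihilated_by_positive y \<Longrightarrow> annihilated_by_positive z \<Longrightarrow> annihilated_by_positive (y + z)"
  unfolding annihilated_by_positive_def by (simp add: distrib_left)

lemma annihilated_by_positive_scale:
  "annihilated_by_positive y \<Longrightarrow> annihilated_by_positive (smul c y)"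
  unfolding annihilated_by_positive_def by (simp add: scale_mult_right[symmetric])

lemma annihilated_by_positive_top_degree:
  assumes "y \<in> A top_degree"
  shows "annihilated_by_positive y"
  unfolding annihilated_by_positive_def
proof (intro allI impI)
  fix j u assume "0 < j" "u \<in> A j"
  then have "u * y \<in> A (j + top_degree)" using assms mult_A by blast
  with \<open>0 < j\<close> show "u * y = 0" using A_above_top_degree by simp
qed

lemma ex_annihilated_left_multiple:
  assumes y: "y \<in> A k" "y \<noteq> 0"
  obtains a j where "a \<in> A j" "a * y \<noteq> 0" "annihilated_by_positive (a * y)"
proof -
  define J where "J = {j. \<exists>a\<in>A j. a * y \<noteq> 0}"
  have "0 \<in> J" unfolding J_def using one_in_A_0 y by force
  moreover have "J \<subseteq> {..n}"
    unfolding J_def using A_above_n by (force simp: not_le[symmetric])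
  ultimately have "Max J \<in> J" and finite_J: "finite J"
    using finite_subset by (auto intro: Max_in)
  then obtain a where a: "a \<in> A (Max J)" "a * y \<noteq> 0" unfolding J_def by blast
  have "annihilated_by_positive (a * y)"
    unfolding annihilated_by_positive_def
  proof (intro allI impI)
    fix i u assume "0 < i" "u \<in> A i"
    have "i + Max J \<notin> J" using Max_ge[OF finite_J, of "i + Max J"] \<open>0 < i\<close> by auto
    moreover have "u * a \<in> A (i + Max J)" using mult_A \<open>u \<in> A i\<close> a(1) by blast
    ultimately show "u * (a * y) = 0" unfolding J_def by (auto simp: mult.assoc)
  qed
  with a that show ?thesis by blast
qed

lemma mult_eq_mult_lowest_component:
  assumes a: "a \<in> A j" and top: "j + k = top_degree"
    and below: "\<And>i. i < k \<Longrightarrow> component x i = 0"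
  shows "a * x = a * component x k"
proof -
  have vanish: "a * component x i = 0" if "i \<noteq> k" for i
  proof (cases "k < i")
    case True
    then have "A (j + i) = {0}" using top A_above_top_degree by simp
    then show ?thesis using mult_A[OF a component_in_A] by blast
  next
    case False
    with that show ?thesis using below by simp
  qed
  have "a * x = (\<Sum>i\<le>n. a * component x i)"
    by (simp only: sum_distrib_left[symmetric] sum_component)
  also have "\<dots> = (\<Sum>i\<le>n. if i = k then a * component x k else 0)"
    using vanish by (intro sum.cong) simp_all
  also have "\<dots> = a * component x k"
  proof (cases "k \<le> n")
    case False
    then have "component x k = 0" using A_above_n[of k] component_in_A[of x k] by simp
    then show ?thesis by simp
  qed simp
  finally show ?thesis .
qed

lemma left_multiple_in_top_degree:
  assumes socle_top: "\<And>y d. y \<in> A d \<Longrightarrow> y \<noteq> 0 \<Longrightarrow> annihilated_by_positive y \<Longrightarrow> d = top_degree"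
    and "x \<noteq> 0"
  obtains a where "a * x \<in> A top_degree" "a * x \<noteq> 0"
proof -
  have "\<exists>k. component x k \<noteq> 0"
  proof (rule ccontr)
    assume "\<nexists>k. component x k \<noteq> 0"
    then have "x = 0" using sum_component[of x] by simp
    with \<open>x \<noteq> 0\<close> show False ..
  qed
  define k where "k = (LEAST k. component x k \<noteq> 0)"
  have lowest: "component x k \<noteq> 0"
    unfolding k_def using \<open>\<exists>k. component x k \<noteq> 0\<close> by (rule LeastI_ex)
  have below: "\<And>i. i < k \<Longrightarrow> component x i = 0"
    unfolding k_def using not_less_Least by blast
  obtain a j where a: "a \<in> A j" "a * component x k \<noteq> 0"
    and ann: "annihilated_by_positive (a * component x k)"
    using ex_annihilated_left_multiple[OF component_in_A lowest] .
  have top: "j + k = top_degree"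
    using socle_top[OF mult_A[OF a(1) component_in_A] a(2) ann] .
  have "a * x = a * component x k"
    using mult_eq_mult_lowest_component[OF a(1) top below] .
  with a(2) mult_A[OF a(1) component_in_A, of x k] top show ?thesis
    by (intro that[of a]) simp_all
qed

end


section \<open>Graded ordered semigroups\<close>

locale ordered_grading =
  fixes g :: "'g::monoid_mult \<Rightarrow> nat" and lt :: "'g \<Rightarrow> 'g \<Rightarrow> bool"
  assumes graded_ordered_semigroup: "graded_ordered_semigroup g lt"
begin

lemma grading_mult: "g (a * b) = g a + g b"
  using graded_ordered_semigroup unfolding graded_ordered_semigroup_def by auto

lemma grading_eq_0_iff: "g a = 0 \<longleftrightarrow> a = 1"
  using graded_ordered_semigroup unfolding graded_ordered_semigroup_def by auto

lemma finite_grading_fibre: "finite {a. g a = k}"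
  using graded_ordered_semigroup unfolding graded_ordered_semigroup_def by auto

lemma lt_grading_eq: "lt a b \<Longrightarrow> g a = g b"
  using graded_ordered_semigroup unfolding graded_ordered_semigroup_def by auto

lemma lt_irrefl: "\<not> lt a a"
  using graded_ordered_semigroup unfolding graded_ordered_semigroup_def by auto

lemma lt_trans: "lt a b \<Longrightarrow> lt b c \<Longrightarrow> lt a c"
  using graded_ordered_semigroup unfolding graded_ordered_semigroup_def by blast

lemma lt_linear_on_fibre: "g a = g b \<Longrightarrow> a = b \<or> lt a b \<or> lt b a"
  using graded_ordered_semigroup unfolding graded_ordered_semigroup_def by blast

lemma lt_mult_left: "lt a b \<Longrightarrow> lt (c * a) (c * b)"
  using graded_ordered_semigroup unfolding graded_ordered_semigroup_def by blast

lemma asymp_on_lt: "asymp_on S lt"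
  unfolding asymp_on_def using lt_irrefl lt_trans by blast

lemma transp_on_lt: "transp_on S lt"
  unfolding transp_on_def using lt_trans by blast

lemma finite_factorizations: "finite {(a, b). a * b = (c::'g)}"
proof (rule finite_subset)
  show "{(a, b). a * b = c} \<subseteq> {a. g a \<le> g c} \<times> {a. g a \<le> g c}"
    using grading_mult by auto
  have "{a. g a \<le> g c} = (\<Union>k\<le>g c. {a. g a = k})" by auto
  then have "finite {a. g a \<le> g c}"
    by (simp only:) (rule finite_UN_I[OF finite_atMost finite_grading_fibre])
  from this this show "finite ({a. g a \<le> g c} \<times> {a. g a \<le> g c})"
    by (rule finite_cartesian_product)
qed

lemma
  assumes "lt b a"
  shows gpred_lt: "lt (gpred lt a) a"
    and lt_imp_le_gpred: "lt c a \<Longrightarrow> c = gpred lt a \<or> lt c (gpred lt a)"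
proof -
  have "{c. lt c a} \<subseteq> {c. g c = g a}" using lt_grading_eq by blast
  then have fin: "finite {c. lt c a}" using finite_grading_fibre by (rule finite_subset)
  have ne: "{c. lt c a} \<noteq> {}" using assms by blast
  obtain m where m: "lt m a" "\<And>c. lt c a \<Longrightarrow> c \<noteq> m \<Longrightarrow> \<not> lt m c"
    using Finite_Set.bex_max_element[OF fin asymp_on_lt transp_on_lt ne] by blast
  have below_m: "c = m \<or> lt c m" if "lt c a" for c
  proof -
    have "g c = g m" using lt_grading_eq[OF that] lt_grading_eq[OF m(1)] by simp
    then show ?thesis using lt_linear_on_fibre m(2)[OF that] by blast
  qed
  have "gpred lt a = m"
    unfolding gpred_def
  proof (rule the_equality)
    show "lt m a \<and> (\<forall>c. lt c a \<longrightarrow> \<not> lt m c)" using m lt_irrefl by blast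
    show "c = m" if "lt c a \<and> (\<forall>d. lt d a \<longrightarrow> \<not> lt c d)" for c
      using that below_m m(1) by blast
  qed
  with m(1) below_m show "lt (gpred lt a) a" "lt c a \<Longrightarrow> c = gpred lt a \<or> lt c (gpred lt a)"
    by auto
qed

end


section \<open>\<open>\<Gamma>\<close>-filtered graded algebras\<close>

locale filtered_graded_algebra =
  graded_complex_algebra smul A n + ordered_grading g lt for smul A n g lt +
  fixes F :: "'g::monoid_mult \<Rightarrow> 'a set"
  assumes gamma_filtration: "gamma_filtration smul A g lt F"
begin

abbreviation F' :: "'g \<Rightarrow> 'a set" where
  "F' \<equiv> Fprev lt F"

abbreviation cls :: "('g \<Rightarrow> 'a) \<Rightarrow> ('g \<Rightarrow> 'a) set" where
  "cls \<equiv> gr_cls lt F"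

abbreviation reps :: "('g \<Rightarrow> 'a) set" where
  "reps \<equiv> gr_reps F"

lemma subspace_F: "V.subspace (F a)"
  using gamma_filtration unfolding gamma_filtration_def by auto

lemma F_subset_A: "F a \<subseteq> A (g a)"
  using gamma_filtration unfolding gamma_filtration_def by auto

lemma F_mono: "lt a b \<Longrightarrow> F a \<subseteq> F b"
  using gamma_filtration unfolding gamma_filtration_def by auto

lemma F_maximal: "(\<And>b. g b = g c \<Longrightarrow> \<not> lt c b) \<Longrightarrow> F c = A (g c)"
  using gamma_filtration unfolding gamma_filtration_def by auto

lemma ex_grading_eq: "A k \<noteq> {0} \<Longrightarrow> \<exists>c. g c = k"
  using gamma_filtration unfolding gamma_filtration_def by auto

lemma mult_F: "x \<in> F a \<Longrightarrow> y \<in> F b \<Longrightarrow> x * y \<in> F (a * b)"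
  using gamma_filtration unfolding gamma_filtration_def by auto

lemma F_one: "F 1 = A 0"
proof -
  have "F 1 = A (g 1)"
    by (rule F_maximal) (metis grading_eq_0_iff lt_irrefl)
  moreover have "g 1 = 0" using grading_eq_0_iff by blast
  ultimately show ?thesis by simp
qed

lemma subspace_F': "V.subspace (F' a)"
  unfolding Fprev_def using subspace_F V.subspace_single_0 by auto

lemma F_subset_F': "lt c a \<Longrightarrow> F c \<subseteq> F' a"
  unfolding Fprev_def using lt_imp_le_gpred[of c a] F_mono by auto

lemma mult_F_F':
  assumes "u \<in> F a" "w \<in> F' b"
  shows "u * w \<in> F' (a * b)"
proof (cases "\<exists>c. lt c b")
  case True
  then have "u * w \<in> F (a * gpred lt b)"
    using assms mult_F unfolding Fprev_def by auto
  moreover have "lt (a * gpred lt b) (a * b)"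
    using True gpred_lt lt_mult_left by blast
  ultimately show ?thesis using F_subset_F' by auto
next
  case False
  then show ?thesis
    using assms V.subspace_0[OF subspace_F'] unfolding Fprev_def by auto
qed

definition is_filtration_degree :: "'g \<Rightarrow> 'a \<Rightarrow> bool" where
  "is_filtration_degree \<mu> y \<longleftrightarrow> y \<in> F \<mu> \<and> y \<notin> F' \<mu>"

lemma ex_filtration_degree:
  assumes y: "y \<in> A d" "y \<noteq> 0"
  obtains \<mu> where "g \<mu> = d" "is_filtration_degree \<mu> y"
proof -
  obtain c where "g c = d" using ex_grading_eq y by blast
  then have "{b. g b = d} \<noteq> {}" by blast
  then obtain m where m: "g m = d" "\<And>b. g b = d \<Longrightarrow> b \<noteq> m \<Longrightarrow> \<not> lt m b"
    using Finite_Set.bex_max_element[OF finite_grading_fibre asymp_on_lt transp_on_lt] by blast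
  have "F m = A (g m)"
    by (rule F_maximal) (use m lt_irrefl in blast)
  with m(1) y(1) have "y \<in> F m" by simp
  define S where "S = {c. g c = d \<and> y \<in> F c}"
  have "S \<subseteq> {c. g c = d}" unfolding S_def by blast
  then have fin: "finite S" using finite_grading_fibre by (rule finite_subset)
  have ne: "S \<noteq> {}" unfolding S_def using m(1) \<open>y \<in> F m\<close> by blast
  obtain \<mu> where \<mu>: "\<mu> \<in> S" "\<And>c. c \<in> S \<Longrightarrow> c \<noteq> \<mu> \<Longrightarrow> \<not> lt c \<mu>"
    using Finite_Set.bex_min_element[OF fin asymp_on_lt transp_on_lt ne] by blast
  have "y \<notin> F' \<mu>"
  proof
    assume "y \<in> F' \<mu>"
    with y(2) obtain b where "lt b \<mu>" and "y \<in> F (gpred lt \<mu>)"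
      unfolding Fprev_def by (auto split: if_splits)
    moreover have "g (gpred lt \<mu>) = d"
      using lt_grading_eq[OF gpred_lt[OF \<open>lt b \<mu>\<close>]] \<mu>(1) unfolding S_def by simp
    ultimately have "gpred lt \<mu> \<in> S" unfolding S_def by blast
    moreover have "gpred lt \<mu> \<noteq> \<mu>" using gpred_lt[OF \<open>lt b \<mu>\<close>] lt_irrefl by metis
    ultimately show False using \<mu>(2) gpred_lt[OF \<open>lt b \<mu>\<close>] by blast
  qed
  with \<mu>(1) that show ?thesis unfolding S_def is_filtration_degree_def by blast
qed

lemma gr_reps_add: "x \<in> reps \<Longrightarrow> y \<in> reps \<Longrightarrow> (\<lambda>a. x a + y a) \<in> reps"
  unfolding gr_reps_def using V.subspace_add[OF subspace_F] by auto

lemma gr_reps_scale: "x \<in> reps \<Longrightarrow> (\<lambda>a. smul c (x a)) \<in> reps"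
  unfolding gr_reps_def using V.subspace_scale[OF subspace_F] by auto

lemma gr_cls_self: "x \<in> reps \<Longrightarrow> x \<in> cls x"
  unfolding gr_cls_def using V.subspace_0[OF subspace_F'] by auto

lemma gr_cls_in_carrier: "x \<in> reps \<Longrightarrow> cls x \<in> gr_carrier lt F"
  unfolding gr_carrier_def by (rule imageI)

lemma gr_cls_eqI:
  assumes "y \<in> reps" and diff: "\<And>a. x a - y a \<in> F' a"
  shows "cls x = cls y"
proof -
  have "x a - z a \<in> F' a \<longleftrightarrow> y a - z a \<in> F' a" for a z
  proof -
    have "y a - z a = (x a - z a) - (x a - y a)" "x a - z a = (y a - z a) + (x a - y a)"
      by (simp_all add: algebra_simps)
    then show ?thesis
      using V.subspace_diff[OF subspace_F' _ diff] V.subspace_add[OF subspace_F' _ diff] by metis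
  qed
  then show ?thesis unfolding gr_cls_def by auto
qed

lemma
  assumes "x \<in> reps"
  shows gr_rep_cls_in_reps: "gr_rep (cls x) \<in> reps"
    and gr_rep_cls_diff: "gr_rep (cls x) a - x a \<in> F' a"
proof -
  have rep: "gr_rep (cls x) \<in> cls x"
    unfolding gr_rep_def by (rule someI[where P = "\<lambda>z. z \<in> cls x", OF gr_cls_self[OF assms]])
  then show "gr_rep (cls x) \<in> reps" unfolding gr_cls_def by auto
  from rep have "x a - gr_rep (cls x) a \<in> F' a" unfolding gr_cls_def by auto
  from V.subspace_neg[OF subspace_F' this] show "gr_rep (cls x) a - x a \<in> F' a" by simp
qed

lemma gr_add_cls:
  assumes "x \<in> reps" "y \<in> reps"
  shows "gr_add lt F (cls x) (cls y) = cls (\<lambda>a. x a + y a)"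
  unfolding gr_add_def
proof (rule gr_cls_eqI)
  show "(\<lambda>a. x a + y a) \<in> reps" using gr_reps_add assms by blast
  fix a
  have "(gr_rep (cls x) a + gr_rep (cls y) a) - (x a + y a)
      = (gr_rep (cls x) a - x a) + (gr_rep (cls y) a - y a)"
    by (simp add: algebra_simps)
  then show "(gr_rep (cls x) a + gr_rep (cls y) a) - (x a + y a) \<in> F' a"
    using V.subspace_add[OF subspace_F' gr_rep_cls_diff[OF assms(1)] gr_rep_cls_diff[OF assms(2)]]
    by (simp only:)
qed

lemma gr_smul_cls:
  assumes "x \<in> reps"
  shows "gr_smul smul lt F c (cls x) = cls (\<lambda>a. smul c (x a))"
  unfolding gr_smul_def
proof (rule gr_cls_eqI)
  show "(\<lambda>a. smul c (x a)) \<in> reps" using gr_reps_scale assms by blast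
  show "smul c (gr_rep (cls x) a) - smul c (x a) \<in> F' a" for a
    using V.subspace_scale[OF subspace_F' gr_rep_cls_diff[OF assms]]
    by (simp add: V.scale_right_diff_distrib)
qed

lemma gr_cls_neq_zero:
  assumes "x \<in> reps" "x a \<notin> F' a"
  shows "cls x \<noteq> gr_zero lt F"
proof
  assume "cls x = gr_zero lt F"
  then have "- x a \<in> F' a"
    using gr_cls_self[OF assms(1)] unfolding gr_zero_def gr_cls_def by auto
  with assms(2) show False using V.subspace_neg[OF subspace_F'] by fastforce
qed

text \<open>Multiplying a class annihilated by everything of positive degree only sees the
  degree-0 part \<open>F 1 = A\<^sub>0 = \<complex>\<close> of the left factor.\<close>

lemma sum_factorizations_annihilated:
  assumes r: "r \<in> reps" "r 1 = smul e 1" and ann: "\<And>b. annihilated_by_positive (f b)"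
  shows "(\<Sum>p\<in>{(\<alpha>, \<beta>). \<alpha> * \<beta> = \<gamma>}. r (fst p) * f (snd p)) = smul e (f \<gamma>)"
proof -
  have "r (fst p) * f (snd p) = (if p = (1, \<gamma>) then smul e (f \<gamma>) else 0)"
    if "p \<in> {(\<alpha>, \<beta>). \<alpha> * \<beta> = \<gamma>}" for p
  proof (cases "fst p = 1")
    case True
    with that have "p = (1, \<gamma>)" by (cases p) auto
    then show ?thesis using r(2) by (simp add: scale_mult_left[symmetric])
  next
    case False
    then have "0 < g (fst p)" using grading_eq_0_iff by auto
    moreover have "r (fst p) \<in> A (g (fst p))" using r(1) F_subset_A unfolding gr_reps_def by blast
    ultimately show ?thesis
      using False ann unfolding annihilated_by_positive_def by auto
  qed
  then have "(\<Sum>p\<in>{(\<alpha>, \<beta>). \<alpha> * \<beta> = \<gamma>}. r (fst p) * f (snd p))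
      = (\<Sum>p\<in>{(\<alpha>, \<beta>). \<alpha> * \<beta> = \<gamma>}. if p = (1, \<gamma>) then smul e (f \<gamma>) else 0)"
    by (rule sum.cong[OF refl])
  also have "\<dots> = smul e (f \<gamma>)" using finite_factorizations by simp
  finally show ?thesis .
qed

lemma gr_mul_cls_annihilated:
  assumes X: "X \<in> gr_carrier lt F" and f: "f \<in> reps"
    and ann: "\<And>b. annihilated_by_positive (f b)"
  obtains e where "gr_mul lt F X (cls f) = cls (\<lambda>a. smul e (f a))"
proof -
  obtain x where x: "x \<in> reps" "X = cls x" using X unfolding gr_carrier_def by auto
  define r where "r = gr_rep X"
  define w where "w b = gr_rep (cls f) b - f b" for b
  have r_reps: "r \<in> reps" unfolding r_def x(2) by (rule gr_rep_cls_in_reps[OF x(1)])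
  have w: "w b \<in> F' b" for b unfolding w_def by (rule gr_rep_cls_diff[OF f])
  have "r 1 \<in> A 0" using r_reps F_one unfolding gr_reps_def by auto
  then obtain e where e: "r 1 = smul e 1" using A_0 by auto
  have "gr_mul lt F X (cls f) = cls (\<lambda>\<gamma>. \<Sum>p\<in>{(\<alpha>, \<beta>). \<alpha> * \<beta> = \<gamma>}. r (fst p) * gr_rep (cls f) (snd p))"
    unfolding gr_mul_def r_def ..
  also have "\<dots> = cls (\<lambda>a. smul e (f a))"
  proof (rule gr_cls_eqI)
    show "(\<lambda>a. smul e (f a)) \<in> reps" using gr_reps_scale[OF f] .
    fix \<gamma>
    have "(\<Sum>p\<in>{(\<alpha>, \<beta>). \<alpha> * \<beta> = \<gamma>}. r (fst p) * gr_rep (cls f) (snd p)) - smul e (f \<gamma>)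
        = (\<Sum>p\<in>{(\<alpha>, \<beta>). \<alpha> * \<beta> = \<gamma>}. r (fst p) * w (snd p))"
      using sum_factorizations_annihilated[where f = f and \<gamma> = \<gamma>, OF r_reps e ann]
      by (simp add: w_def right_diff_distrib sum_subtractf)
    also have "\<dots> \<in> F' \<gamma>"
      using r_reps w mult_F_F' unfolding gr_reps_def
      by (intro V.subspace_sum[OF subspace_F']) auto
    finally show "(\<Sum>p\<in>{(\<alpha>, \<beta>). \<alpha> * \<beta> = \<gamma>}. r (fst p) * gr_rep (cls f) (snd p))
        - smul e (f \<gamma>) \<in> F' \<gamma>" .
  qed
  finally show ?thesis using that by blast
qed

definition gr_single :: "'g \<Rightarrow> 'a \<Rightarrow> 'g \<Rightarrow> 'a" where
  "gr_single \<mu> y = (\<lambda>a. if a = \<mu> then y else 0)"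

lemma gr_single_reps: "y \<in> F \<mu> \<Longrightarrow> gr_single \<mu> y \<in> reps"
  unfolding gr_single_def gr_reps_def using V.subspace_0[OF subspace_F] by auto

lemma gr_single_neq_zero: "is_filtration_degree \<mu> y \<Longrightarrow> cls (gr_single \<mu> y) \<noteq> gr_zero lt F"
  using gr_cls_neq_zero[of "gr_single \<mu> y" \<mu>] gr_single_reps
  unfolding is_filtration_degree_def gr_single_def by simp

lemma gr_single_add: "gr_single \<mu> (y + z) = (\<lambda>a. gr_single \<mu> y a + gr_single \<mu> z a)"
  unfolding gr_single_def by auto

lemma gr_single_scale: "gr_single \<mu> (smul c y) = (\<lambda>a. smul c (gr_single \<mu> y a))"
  unfolding gr_single_def by auto

lemma annihilated_by_positive_gr_single:
  "annihilated_by_positive y \<Longrightarrow> annihilated_by_positive (gr_single \<mu> y a)"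
  unfolding gr_single_def using annihilated_by_positive_0 by simp

end


section \<open>Filtrations whose associated graded algebra is Frobenius\<close>

locale gr_frobenius_filtration = filtered_graded_algebra smul A n g lt F
  for smul :: "complex \<Rightarrow> 'a::ring_1 \<Rightarrow> 'a" and A n and g :: "'g::monoid_mult \<Rightarrow> nat" and lt F +
  assumes gr_frobenius: "gr_frobenius smul lt F"
begin

definition gr_form :: "('g \<Rightarrow> 'a) set \<Rightarrow> complex" where
  "gr_form = (SOME \<phi>.
     (\<forall>x\<in>gr_carrier lt F. \<forall>y\<in>gr_carrier lt F. \<phi> (gr_add lt F x y) = \<phi> x + \<phi> y) \<and>
     (\<forall>c. \<forall>x\<in>gr_carrier lt F. \<phi> (gr_smul smul lt F c x) = c * \<phi> x) \<and>
     (\<forall>I. left_ideal (gr_carrier lt F) (gr_add lt F) (gr_smul smul lt F) (gr_mul lt F) (gr_zero lt F) I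
        \<longrightarrow> (\<forall>x\<in>I. \<phi> x = 0) \<longrightarrow> I \<subseteq> {gr_zero lt F}))"

lemma gr_form:
  "(\<forall>x\<in>gr_carrier lt F. \<forall>y\<in>gr_carrier lt F. gr_form (gr_add lt F x y) = gr_form x + gr_form y) \<and>
   (\<forall>c. \<forall>x\<in>gr_carrier lt F. gr_form (gr_smul smul lt F c x) = c * gr_form x) \<and>
   (\<forall>I. left_ideal (gr_carrier lt F) (gr_add lt F) (gr_smul smul lt F) (gr_mul lt F) (gr_zero lt F) I
      \<longrightarrow> (\<forall>x\<in>I. gr_form x = 0) \<longrightarrow> I \<subseteq> {gr_zero lt F})"
  using gr_frobenius unfolding gr_frobenius_def frobenius_def gr_form_def by (rule someI_ex)

lemma gr_form_add:
  "x \<in> gr_carrier lt F \<Longrightarrow> y \<in> gr_carrier lt F \<Longrightarrow> gr_form (gr_add lt F x y) = gr_form x + gr_form y"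
  using conjunct1[OF gr_form] by blast

lemma gr_form_smul: "x \<in> gr_carrier lt F \<Longrightarrow> gr_form (gr_smul smul lt F c x) = c * gr_form x"
  using conjunct1[OF conjunct2[OF gr_form]] by blast

lemma gr_form_kernel:
  "left_ideal (gr_carrier lt F) (gr_add lt F) (gr_smul smul lt F) (gr_mul lt F) (gr_zero lt F) I
    \<Longrightarrow> \<forall>x\<in>I. gr_form x = 0 \<Longrightarrow> I \<subseteq> {gr_zero lt F}"
  using conjunct2[OF conjunct2[OF gr_form]] by blast

lemma gr_form_cls_add:
  assumes "x \<in> reps" "y \<in> reps"
  shows "gr_form (cls (\<lambda>a. x a + y a)) = gr_form (cls x) + gr_form (cls y)"
  using gr_form_add[OF gr_cls_in_carrier gr_cls_in_carrier, OF assms] unfolding gr_add_cls[OF assms] .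

lemma gr_form_cls_scale:
  assumes "x \<in> reps"
  shows "gr_form (cls (\<lambda>a. smul c (x a))) = c * gr_form (cls x)"
  using gr_form_smul[OF gr_cls_in_carrier, OF assms] unfolding gr_smul_cls[OF assms] .

lemma gr_form_annihilated_neq_0:
  assumes f: "f \<in> reps" and ann: "\<And>b. annihilated_by_positive (f b)"
    and nz: "cls f \<noteq> gr_zero lt F"
  shows "gr_form (cls f) \<noteq> 0"
proof
  assume zero: "gr_form (cls f) = 0"
  define fc where "fc c = (\<lambda>a. smul c (f a))" for c
  have fc_reps: "fc c \<in> reps" for c unfolding fc_def using gr_reps_scale[OF f] .
  have fc_ann: "annihilated_by_positive (fc c b)" for c b
    unfolding fc_def using ann annihilated_by_positive_scale by blast
  define I where "I = range (\<lambda>c. cls (fc c))"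
  have "left_ideal (gr_carrier lt F) (gr_add lt F) (gr_smul smul lt F) (gr_mul lt F) (gr_zero lt F) I"
    unfolding left_ideal_def
  proof (intro conjI ballI allI)
    show "I \<subseteq> gr_carrier lt F" unfolding I_def using gr_cls_in_carrier fc_reps by auto
    have "fc 0 = (\<lambda>_. 0)" unfolding fc_def by simp
    then show "gr_zero lt F \<in> I" unfolding I_def gr_zero_def by (metis rangeI)
  next
    fix X Y assume "X \<in> I" "Y \<in> I"
    then obtain c d where "X = cls (fc c)" "Y = cls (fc d)" unfolding I_def by auto
    moreover have "(\<lambda>a. fc c a + fc d a) = fc (c + d)"
      unfolding fc_def by (simp add: V.scale_left_distrib)
    ultimately show "gr_add lt F X Y \<in> I" unfolding I_def using gr_add_cls[OF fc_reps fc_reps] by simp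
  next
    fix e X assume "X \<in> I"
    then obtain c where "X = cls (fc c)" unfolding I_def by auto
    moreover have "(\<lambda>a. smul e (fc c a)) = fc (e * c)" unfolding fc_def by simp
    ultimately show "gr_smul smul lt F e X \<in> I" unfolding I_def using gr_smul_cls[OF fc_reps] by simp
  next
    fix X Y assume X: "X \<in> gr_carrier lt F" and "Y \<in> I"
    then obtain c where Y: "Y = cls (fc c)" unfolding I_def by auto
    obtain e where "gr_mul lt F X Y = cls (\<lambda>a. smul e (fc c a))"
      using gr_mul_cls_annihilated[where f = "fc c", OF X fc_reps fc_ann] unfolding Y .
    moreover have "(\<lambda>a. smul e (fc c a)) = fc (e * c)" unfolding fc_def by simp
    ultimately show "gr_mul lt F X Y \<in> I" unfolding I_def by simp
  qed
  moreover have "\<forall>X\<in>I. gr_form X = 0"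
    unfolding I_def fc_def using gr_form_cls_scale[OF f] zero by auto
  ultimately have "I \<subseteq> {gr_zero lt F}" by (rule gr_form_kernel)
  moreover have "fc 1 = f" unfolding fc_def by simp
  then have "cls f \<in> I" unfolding I_def by (metis rangeI)
  ultimately show False using nz by auto
qed

lemma gr_form_single_neq_0:
  assumes "annihilated_by_positive y" "is_filtration_degree \<mu> y"
  shows "gr_form (cls (gr_single \<mu> y)) \<noteq> 0"
proof (rule gr_form_annihilated_neq_0)
  show "gr_single \<mu> y \<in> reps"
    using assms(2) gr_single_reps unfolding is_filtration_degree_def by blast
  show "annihilated_by_positive (gr_single \<mu> y b)" for b
    using annihilated_by_positive_gr_single[OF assms(1)] .
  show "cls (gr_single \<mu> y) \<noteq> gr_zero lt F"
    using gr_single_neq_zero[OF assms(2)] .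
qed

lemma filtration_degree_unique:
  assumes ann: "annihilated_by_positive y" "annihilated_by_positive z"
    and deg: "is_filtration_degree l y" "is_filtration_degree m z"
  shows "l = m"
proof (rule ccontr)
  assume "l \<noteq> m"
  define Y where "Y = gr_single l y"
  define Z where "Z = gr_single m z"
  have Y: "Y \<in> reps" and Z: "Z \<in> reps"
    unfolding Y_def Z_def using gr_single_reps deg unfolding is_filtration_degree_def by blast+
  have \<psi>Z: "gr_form (cls Z) \<noteq> 0" unfolding Z_def using gr_form_single_neq_0[OF ann(2) deg(2)] .
  text \<open>A combination of the two symbols that is killed by the form.\<close>
  define W where "W = (\<lambda>a. smul (gr_form (cls Z)) (Y a) + smul (- gr_form (cls Y)) (Z a))"
  have W: "W \<in> reps" unfolding W_def by (intro gr_reps_add gr_reps_scale Y Z)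
  have "gr_form (cls W) = gr_form (cls (\<lambda>a. smul (gr_form (cls Z)) (Y a)))
      + gr_form (cls (\<lambda>a. smul (- gr_form (cls Y)) (Z a)))"
    unfolding W_def by (rule gr_form_cls_add[OF gr_reps_scale[OF Y] gr_reps_scale[OF Z]])
  also have "\<dots> = 0" by (simp only: gr_form_cls_scale[OF Y] gr_form_cls_scale[OF Z]) simp
  finally have "gr_form (cls W) = 0" .
  moreover have "annihilated_by_positive (W a)" for a
    unfolding W_def Y_def Z_def
    by (intro annihilated_by_positive_add annihilated_by_positive_scale
        annihilated_by_positive_gr_single ann)
  moreover have "W l \<notin> F' l"
  proof
    assume "W l \<in> F' l"
    then have "smul (inverse (gr_form (cls Z))) (W l) \<in> F' l"
      using V.subspace_scale[OF subspace_F'] by blast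
    moreover have "Y l = y" "Z l = 0"
      unfolding Y_def Z_def gr_single_def using \<open>l \<noteq> m\<close> by simp_all
    then have "smul (inverse (gr_form (cls Z))) (W l) = y"
      unfolding W_def using \<psi>Z by simp
    ultimately show False using deg(1) unfolding is_filtration_degree_def by simp
  qed
  ultimately show False using gr_form_annihilated_neq_0[OF W] gr_cls_neq_zero[OF W] by blast
qed

lemma ex_socle_filtration_degree:
  "\<exists>\<omega>. g \<omega> = top_degree \<and>
     (\<forall>y \<mu>. annihilated_by_positive y \<longrightarrow> is_filtration_degree \<mu> y \<longrightarrow> \<mu> = \<omega>)"
proof -
  obtain z where z: "z \<in> A top_degree" "z \<noteq> 0"
    using A_top_degree_neq V.subspace_0[OF subspace_A] by blast
  then obtain \<omega> where \<omega>: "g \<omega> = top_degree" "is_filtration_degree \<omega> z"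
    by (rule ex_filtration_degree)
  have "\<mu> = \<omega>" if "annihilated_by_positive y" "is_filtration_degree \<mu> y" for y \<mu>
    using filtration_degree_unique[OF that(1) annihilated_by_positive_top_degree[OF z(1)]
        that(2) \<omega>(2)] .
  with \<omega>(1) show ?thesis by blast
qed

lemma annihilated_in_top_degree:
  assumes "y \<in> A d" "y \<noteq> 0" "annihilated_by_positive y"
  shows "d = top_degree"
proof -
  obtain \<mu> where \<mu>: "g \<mu> = d" "is_filtration_degree \<mu> y"
    using ex_filtration_degree[OF assms(1,2)] .
  obtain \<omega> where "g \<omega> = top_degree" "\<forall>y \<mu>. annihilated_by_positive y \<longrightarrow>
      is_filtration_degree \<mu> y \<longrightarrow> \<mu> = \<omega>"
    using ex_socle_filtration_degree by blast
  with \<mu> assms(3) show ?thesis by blast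
qed

lemma ex_top_degree_filtration_degree:
  "\<exists>\<omega>. \<forall>y\<in>A top_degree. y \<noteq> 0 \<longrightarrow> is_filtration_degree \<omega> y"
proof -
  obtain \<omega> where \<omega>: "\<And>y \<mu>. annihilated_by_positive y \<Longrightarrow> is_filtration_degree \<mu> y \<Longrightarrow> \<mu> = \<omega>"
    using ex_socle_filtration_degree by blast
  have "is_filtration_degree \<omega> y" if y: "y \<in> A top_degree" "y \<noteq> 0" for y
  proof -
    obtain \<mu> where "g \<mu> = top_degree" and \<mu>: "is_filtration_degree \<mu> y"
      using ex_filtration_degree[OF y] .
    then have "\<mu> = \<omega>" using \<omega>[OF annihilated_by_positive_top_degree[OF y(1)]] by blast
    with \<mu> show ?thesis by simp
  qed
  then show ?thesis by blast
qed

end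

theorem proposition3:
  fixes smul :: "complex \<Rightarrow> 'a::ring_1 \<Rightarrow> 'a"
    and A :: "nat \<Rightarrow> 'a set" and n :: nat
    and g :: "'g::monoid_mult \<Rightarrow> nat" and lt :: "'g \<Rightarrow> 'g \<Rightarrow> bool"
    and F :: "'g \<Rightarrow> 'a set"
  assumes "graded_algebra smul A n"
    and "fin_dim smul"
    and "graded_ordered_semigroup g lt"
    and "gamma_filtration smul A g lt F"
    and "gr_frobenius smul lt F"
  shows "frobenius UNIV (+) smul (*) 0"
proof -
  interpret gr_frobenius_filtration smul A n g lt F
    using assms(1,3,4,5) by unfold_locales
  obtain \<omega> where \<omega>: "\<And>y. y \<in> A top_degree \<Longrightarrow> y \<noteq> 0 \<Longrightarrow> is_filtration_degree \<omega> y"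
    using ex_top_degree_filtration_degree by blast
  have top_in_F: "component x top_degree \<in> F \<omega>" for x
  proof (cases "component x top_degree = 0")
    case True
    then show ?thesis using V.subspace_0[OF subspace_F] by simp
  next
    case False
    then show ?thesis using \<omega>[OF component_in_A] unfolding is_filtration_degree_def by blast
  qed
  define \<phi> where "\<phi> x = gr_form (cls (gr_single \<omega> (component x top_degree)))" for x
  show ?thesis
  proof (rule frobeniusI)
    show "\<phi> (x + y) = \<phi> x + \<phi> y" for x y
      unfolding \<phi>_def component_add gr_single_add
      by (rule gr_form_cls_add[OF gr_single_reps[OF top_in_F] gr_single_reps[OF top_in_F]])
    show "\<phi> (smul c x) = c * \<phi> x" for c x
      unfolding \<phi>_def component_scale gr_single_scale
      by (rule gr_form_cls_scale[OF gr_single_reps[OF top_in_F]])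
    show "\<exists>a. \<phi> (a * x) \<noteq> 0" if "x \<noteq> 0" for x
    proof -
      obtain a where a: "a * x \<in> A top_degree" "a * x \<noteq> 0"
        using left_multiple_in_top_degree[OF annihilated_in_top_degree \<open>x \<noteq> 0\<close>] .
      have "\<phi> (a * x) \<noteq> 0"
        unfolding \<phi>_def component_homogeneous[OF a(1) top_degree_le]
        using gr_form_single_neq_0[OF annihilated_by_positive_top_degree[OF a(1)] \<omega>[OF a]] .
      then show ?thesis ..
    qed
  qed
qed

end
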